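(* Let $\omega$ be a Poisson point process on $\mathbb{R}^2$ with intensity $1$ (law $\mathbb{P}$). Let $\xi$ be the exponent of transversal fluctuations (defined in the context), let $\gamma\in(\xi,1)$, $b\in(\gamma,1)$, and let $N$ be such that $N^b-4N^\gamma>0$. Let $\mathbf{v}_1=(1/\sqrt2,1/\sqrt2)$, $\mathbf{v}_2=(-1/\sqrt2,1/\sqrt2)$, $m_N=3N^\gamma\mathbf{v}_2$, and let $C_2=C(\gamma,N)+m_N$, where $C(\gamma,N)=\{(x,y)\,;\,0\le x+y\le 2N,\ -\sqrt{2}N^{\gamma}\le -x+y\le \sqrt{2}N^{\gamma}\}$. Let $A=(N^b+2N^\gamma)\mathbf{v}_1+2N^\gamma\mathbf{v}_2$ and $B=(N^b+4N^\gamma)\mathbf{v}_1+4N^\gamma\mathbf{v}_2$ (so the segment $AB$ is vertical with $A$ on the lower and $B$ on the upper side of $C_2$). Let $K=[8N^{2\gamma}]+1$ and divide $AB$ into $K$ equal segments with endpoints $z_0=A,z_1,\dots,z_K=B$. Let $L_i$ be the part of the horizontal line through $z_i$ lying in $C_2$, and let $F_i$ be the parallelogram in $C_2$ between $L_{i-1}$ and $L_i$, $i=1,\dots,K$. Let $t_N=\sqrt2N-6N^\gamma-2N^b$ and $F_i'=F_i+t_N\mathbf{v}_1$. Set $$D_N(\omega)=\max_{1\le i\le K}\omega(\bar F_i)+\max_{1\le j\le K}\omega(\bar F_j'),$$ where $\omega(F)$ is the number of Poisson points in $F$ and $\bar F$ is the closure. Then there is a numerical constant $C$ such that $$\mathbb{P}[D_N(\omega)\ge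 d]\le C(8N^{2\gamma}+1)e^{-d/2}$$ for all $d\ge1$.
   Context: Write $(x,y)\prec(x',y')$ if $x<x'$ and $y<y'$. For $w\prec w'$, an up/right path from $w$ to $w'$ is a sequence of Poisson points $\zeta_1\prec\cdots\prec\zeta_M$ with $w\prec\zeta_1$, $\zeta_M\prec w'$, of length $M$; $d(w,w';\omega)$ is the maximal length, and a maximal path attains it. With $w_N=(N,N)$, $A_N^\gamma$ is the event that every maximal path from $0$ to $w_N$ has all its points in $C(\gamma,N)$, and $\xi=\inf\{\gamma>0\,;\,\liminf_{N\to\infty}\mathbb{P}[A_N^\gamma]=1\}$ (it is a fact that $\xi<1$). $[x]$ denotes the integer part. *)

theory Defs
  imports "HOL-Probability.Probability"
begin

type_synonym pt = "real \<times> real"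

text \<open>A point configuration is modelled as a set of points of the plane.\<close>

definition count_in :: "pt set \<Rightarrow> pt set \<Rightarrow> nat" where
  "count_in P A = card (P \<inter> A)"

definition poisson_pp :: "'a measure \<Rightarrow> ('a \<Rightarrow> pt set) \<Rightarrow> bool" where
  "poisson_pp M Om \<longleftrightarrow> prob_space M \<and>
     (\<forall>A. A \<in> sets borel \<and> bounded A \<longrightarrow>
        (\<forall>x\<in>space M. finite (Om x \<inter> A)) \<and>
        (\<lambda>x. count_in (Om x) A) \<in> measurable M (count_space UNIV) \<and>
        (\<forall>k::nat. measure M {x\<in>space M. count_in (Om x) A = k} =
            (measure lborel A) ^ k / fact k * exp (- measure lborel A))) \<and>
     (\<forall>A :: nat \<Rightarrow> pt set. (\<forall>i. A i \<in> sets borel \<and> bounded (A i)) \<and> disjoint_family A \<longrightarrow>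
        prob_space.indep_vars M (\<lambda>_. count_space UNIV) (\<lambda>i x. count_in (Om x) (A i)) UNIV)"

definition prec :: "pt \<Rightarrow> pt \<Rightarrow> bool" where
  "prec w w' \<longleftrightarrow> fst w < fst w' \<and> snd w < snd w'"

definition up_right_path :: "pt set \<Rightarrow> pt \<Rightarrow> pt \<Rightarrow> pt list \<Rightarrow> bool" where
  "up_right_path P w w' zs \<longleftrightarrow> sorted_wrt prec zs \<and> set zs \<subseteq> P \<and>
     (zs \<noteq> [] \<longrightarrow> prec w (hd zs) \<and> prec (last zs) w')"

definition lpp_dist :: "pt \<Rightarrow> pt \<Rightarrow> pt set \<Rightarrow> nat" where
  "lpp_dist w w' P = Max {length zs | zs. up_right_path P w w' zs}"

definition maximal_path :: "pt set \<Rightarrow> pt \<Rightarrow> pt \<Rightarrow> pt list \<Rightarrow> bool" where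
  "maximal_path P w w' zs \<longleftrightarrow> up_right_path P w w' zs \<and> length zs = lpp_dist w w' P"

definition cyl :: "real \<Rightarrow> real \<Rightarrow> pt set" where
  "cyl \<gamma> N = {(x, y). 0 \<le> x + y \<and> x + y \<le> 2 * N \<and>
      - sqrt 2 * N powr \<gamma> \<le> - x + y \<and> - x + y \<le> sqrt 2 * N powr \<gamma>}"

definition event_A :: "'a measure \<Rightarrow> ('a \<Rightarrow> pt set) \<Rightarrow> real \<Rightarrow> nat \<Rightarrow> 'a set" where
  "event_A M Om \<gamma> N = {x \<in> space M. \<forall>zs. maximal_path (Om x) (0, 0) (real N, real N) zs
        \<longrightarrow> set zs \<subseteq> cyl \<gamma> (real N)}"

definition xi_exp :: "'a measure \<Rightarrow> ('a \<Rightarrow> pt set) \<Rightarrow> real" where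
  "xi_exp M Om = Inf {\<gamma>. \<gamma> > 0 \<and>
      liminf (\<lambda>N. ereal (measure M (event_A M Om \<gamma> N))) = 1}"

definition v1 :: pt where "v1 = (1 / sqrt 2, 1 / sqrt 2)"
definition v2 :: pt where "v2 = (- 1 / sqrt 2, 1 / sqrt 2)"

definition C2 :: "real \<Rightarrow> real \<Rightarrow> pt set" where
  "C2 \<gamma> N = (\<lambda>p. p + (3 * N powr \<gamma>) *\<^sub>R v2) ` cyl \<gamma> N"

definition ptA :: "real \<Rightarrow> real \<Rightarrow> real \<Rightarrow> pt" where
  "ptA \<gamma> b N = (N powr b + 2 * N powr \<gamma>) *\<^sub>R v1 + (2 * N powr \<gamma>) *\<^sub>R v2"

definition ptB :: "real \<Rightarrow> real \<Rightarrow> real \<Rightarrow> pt" where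
  "ptB \<gamma> b N = (N powr b + 4 * N powr \<gamma>) *\<^sub>R v1 + (4 * N powr \<gamma>) *\<^sub>R v2"

definition nK :: "real \<Rightarrow> real \<Rightarrow> nat" where
  "nK \<gamma> N = nat \<lfloor>8 * N powr (2 * \<gamma>)\<rfloor> + 1"

definition zpt :: "real \<Rightarrow> real \<Rightarrow> real \<Rightarrow> nat \<Rightarrow> pt" where
  "zpt \<gamma> b N i = ptA \<gamma> b N + (real i / real (nK \<gamma> N)) *\<^sub>R (ptB \<gamma> b N - ptA \<gamma> b N)"

definition Fpar :: "real \<Rightarrow> real \<Rightarrow> real \<Rightarrow> nat \<Rightarrow> pt set" where
  "Fpar \<gamma> b N i = {p \<in> C2 \<gamma> N. snd (zpt \<gamma> b N (i - 1)) \<le> snd p \<and> snd p \<le> snd (zpt \<gamma> b N i)}"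

definition tN :: "real \<Rightarrow> real \<Rightarrow> real \<Rightarrow> real" where
  "tN \<gamma> b N = sqrt 2 * N - 6 * N powr \<gamma> - 2 * N powr b"

definition Fpar' :: "real \<Rightarrow> real \<Rightarrow> real \<Rightarrow> nat \<Rightarrow> pt set" where
  "Fpar' \<gamma> b N i = (\<lambda>p. p + tN \<gamma> b N *\<^sub>R v1) ` Fpar \<gamma> b N i"

definition D_N :: "real \<Rightarrow> real \<Rightarrow> real \<Rightarrow> pt set \<Rightarrow> nat" where
  "D_N \<gamma> b N P =
     Max ((\<lambda>i. count_in P (closure (Fpar \<gamma> b N i))) ` {1..nK \<gamma> N}) +
     Max ((\<lambda>j. count_in P (closure (Fpar' \<gamma> b N j))) ` {1..nK \<gamma> N})"

end

(* Each cell F_i is the slice of the strip C_2 (horizontal width 2 sqrt 2 N^gamma) between two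
   horizontal lines at distance 2 sqrt 2 N^gamma / K, so it lies in a box of area at most 2
   because K > 8 N^(2 gamma); so does its translate F_i'. Hence the counts of their closures are
   Poisson with mean at most 2, and the exponential Chebyshev inequality bounds the probability
   that such a count is at least t by exp (2 (e - 1)) exp (-t). If D_N >= d, one of the 2K counts is
   at least d/2, and a union bound with K <= 8 N^(2 gamma) + 1 concludes. *)

theory Submission
  imports Defs
begin

lemma sums_measure_nat_ge:
  fixes f :: "'a \<Rightarrow> nat"
  assumes "finite_measure M" and f: "f \<in> measurable M (count_space UNIV)"
  shows "(\<lambda>k. measure M {x\<in>space M. f x = k + n}) sums measure M {x\<in>space M. n \<le> f x}"
proof -
  interpret finite_measure M by fact
  define A where "A k = {x\<in>space M. f x = k + n}" for k
  have "A k \<in> sets M" for k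
    unfolding A_def using f by measurable
  then have "range A \<subseteq> sets M" by auto
  moreover have "disjoint_family A"
    unfolding disjoint_family_on_def A_def by auto
  moreover have "(\<Union>k. A k) = {x\<in>space M. n \<le> f x}"
    unfolding A_def by (auto simp: le_iff_add add.commute)
  ultimately show ?thesis
    using measure_UNION[of A M] unfolding A_def by (simp add: emeasure_eq_measure)
qed

lemma poisson_tail_le:
  fixes f :: "'a \<Rightarrow> nat" and lam t :: real
  assumes "prob_space M" and f: "f \<in> measurable M (count_space UNIV)"
    and pmf: "\<And>k. measure M {x\<in>space M. f x = k} = lam ^ k / fact k * exp (- lam)"
    and "0 \<le> lam"
  shows "measure M {x\<in>space M. t \<le> real (f x)} \<le> exp ((exp 1 - 1) * lam - t)"
proof -
  interpret prob_space M by fact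
  define n where "n = nat \<lceil>t\<rceil>"
  define g where "g m = (exp 1 * lam) ^ m /\<^sub>R fact m" for m
  have tail: "{x\<in>space M. t \<le> real (f x)} = {x\<in>space M. n \<le> f x}"
    unfolding n_def by (auto simp: nat_le_iff ceiling_le_iff)
  \<comment> \<open>exponential Chebyshev: for \<open>m \<ge> t\<close> multiply by \<open>exp 1 ^ m * exp (- t) \<ge> 1\<close>\<close>
  have term_le: "measure M {x\<in>space M. f x = k + n} \<le> exp (- lam) * exp (- t) * g (k + n)" for k
  proof -
    have "exp t \<le> exp 1 ^ (k + n)"
      unfolding exp_of_nat_mult[symmetric] n_def by simp linarith
    then have "1 \<le> exp 1 ^ (k + n) * exp (- t)"
      by (simp add: exp_minus field_simps)
    then have "lam ^ (k + n) / fact (k + n) * exp (- lam) * 1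
        \<le> lam ^ (k + n) / fact (k + n) * exp (- lam) * (exp 1 ^ (k + n) * exp (- t))"
      using \<open>0 \<le> lam\<close> by (intro mult_left_mono) auto
    then show ?thesis
      unfolding pmf g_def by (simp add: power_mult_distrib divide_inverse mult_ac)
  qed
  have series: "(\<lambda>k. exp (- lam) * exp (- t) * g (k + n))
      sums (exp (- lam) * exp (- t) * (exp (exp 1 * lam) - (\<Sum>i<n. g i)))"
    unfolding g_def by (intro sums_mult sums_split_initial_segment exp_converges)
  have "measure M {x\<in>space M. t \<le> real (f x)}
      \<le> exp (- lam) * exp (- t) * (exp (exp 1 * lam) - (\<Sum>i<n. g i))"
    unfolding tail
    by (rule sums_le[OF term_le sums_measure_nat_ge[OF finite_measure_axioms f] series])
  also have "\<dots> \<le> exp (- lam) * exp (- t) * exp (exp 1 * lam)"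
    unfolding g_def using \<open>0 \<le> lam\<close> by (intro mult_left_mono) (auto intro!: sum_nonneg)
  also have "\<dots> = exp ((exp 1 - 1) * lam - t)"
    by (simp add: exp_add[symmetric] algebra_simps)
  finally show ?thesis .
qed

lemma measure_lborel_cbox_translation:
  fixes a b c :: "'a::euclidean_space"
  shows "measure lborel (cbox (c + a) (c + b)) = measure lborel (cbox a b)"
proof -
  have "cbox (c + a) (c + b) = {} \<longleftrightarrow> cbox a b = {}"
    by (simp add: cbox_translation)
  then show ?thesis
    by (simp add: content_cbox_if inner_simps)
qed

lemma measure_UNION_le_card_mult:
  assumes "finite I" "\<And>i. i \<in> I \<Longrightarrow> F i \<in> sets M" "\<And>i. i \<in> I \<Longrightarrow> measure M (F i) \<le> p"
  shows "measure M (\<Union>i\<in>I. F i) \<le> real (card I) * p"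
proof -
  have "measure M (\<Union>i\<in>I. F i) \<le> (\<Sum>i\<in>I. measure M (F i))"
    using assms(1,2) by (rule measure_UNION_le)
  also have "\<dots> \<le> real (card I) * p"
    using assms(3) by (rule sum_bounded_above)
  finally show ?thesis .
qed

lemma Max_add_Max_geD:
  fixes f g :: "'i \<Rightarrow> nat"
  assumes "finite I" "I \<noteq> {}" "d \<le> real (Max (f ` I) + Max (g ` I))"
  shows "\<exists>i\<in>I. d / 2 \<le> real (f i) \<or> d / 2 \<le> real (g i)"
proof -
  have "d / 2 \<le> real (Max (f ` I)) \<or> d / 2 \<le> real (Max (g ` I))"
    using assms(3) by linarith
  moreover have "Max (f ` I) \<in> f ` I" "Max (g ` I) \<in> g ` I"
    using assms(1,2) by (auto intro: Max_in)
  ultimately show ?thesis by auto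
qed

lemma poisson_pp_count_tail:
  assumes pp: "poisson_pp M Om" and A: "A \<in> sets borel" "bounded A"
    and area: "measure lborel A \<le> a"
  shows "{x\<in>space M. t \<le> real (count_in (Om x) A)} \<in> sets M"
    and "measure M {x\<in>space M. t \<le> real (count_in (Om x) A)} \<le> exp ((exp 1 - 1) * a - t)"
proof -
  have ps: "prob_space M"
    and count: "(\<lambda>x. count_in (Om x) A) \<in> measurable M (count_space UNIV)"
    and pmf: "\<And>k. measure M {x\<in>space M. count_in (Om x) A = k} =
       measure lborel A ^ k / fact k * exp (- measure lborel A)"
    using pp A unfolding poisson_pp_def by blast+
  show "{x\<in>space M. t \<le> real (count_in (Om x) A)} \<in> sets M"
    using count by measurable
  have "measure M {x\<in>space M. t \<le> real (count_in (Om x) A)}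
      \<le> exp ((exp 1 - 1) * measure lborel A - t)"
    by (rule poisson_tail_le[OF ps count pmf measure_nonneg])
  also have "\<dots> \<le> exp ((exp 1 - 1) * a - t)"
    using area by (simp add: mult_left_mono)
  finally show "measure M {x\<in>space M. t \<le> real (count_in (Om x) A)}
      \<le> exp ((exp 1 - 1) * a - t)" .
qed

lemma poisson_pp_closure_count_tail:
  assumes pp: "poisson_pp M Om" and S: "S \<subseteq> cbox u w" and area: "measure lborel (cbox u w) \<le> a"
  shows "{x\<in>space M. t \<le> real (count_in (Om x) (closure S))} \<in> sets M"
    and "measure M {x\<in>space M. t \<le> real (count_in (Om x) (closure S))}
      \<le> exp ((exp 1 - 1) * a - t)"
proof -
  have sub: "closure S \<subseteq> cbox u w"
    using S closure_minimal closed_cbox by blast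
  then have "measure lborel (closure S) \<le> measure lborel (cbox u w)"
    by (intro measure_mono_fmeasurable) (auto simp: borel_closed)
  then have "measure lborel (closure S) \<le> a"
    using area by linarith
  moreover have "closure S \<in> sets borel" "bounded (closure S)"
    using sub bounded_subset[OF bounded_cbox] by (auto simp: borel_closed)
  ultimately show "{x\<in>space M. t \<le> real (count_in (Om x) (closure S))} \<in> sets M"
    and "measure M {x\<in>space M. t \<le> real (count_in (Om x) (closure S))}
      \<le> exp ((exp 1 - 1) * a - t)"
    using poisson_pp_count_tail[OF pp] by blast+
qed

lemma C2_snd_minus_fst:
  assumes "p \<in> C2 \<gamma> N"
  shows "4 * (N powr \<gamma> / sqrt 2) \<le> snd p - fst p" "snd p - fst p \<le> 8 * (N powr \<gamma> / sqrt 2)"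
proof -
  define q where "q = N powr \<gamma> / sqrt 2"
  obtain x y where xy: "(x, y) \<in> cyl \<gamma> N" "p = (x, y) + (3 * N powr \<gamma>) *\<^sub>R v2"
    using assms unfolding C2_def by auto
  have "sqrt 2 * N powr \<gamma> = 2 * q"
    unfolding q_def by (simp add: field_simps)
  then have "- (2 * q) \<le> y - x" "y - x \<le> 2 * q"
    using xy(1) unfolding cyl_def by auto
  moreover have "p = (x - 3 * q, y + 3 * q)"
    unfolding xy(2) q_def v2_def by (simp add: field_simps)
  ultimately show "4 * q \<le> snd p - fst p" "snd p - fst p \<le> 8 * q"
    by auto
qed

lemma snd_zpt:
  "snd (zpt \<gamma> b N i) = snd (ptA \<gamma> b N) + real i / real (nK \<gamma> N) * (4 * (N powr \<gamma> / sqrt 2))"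
proof -
  have "snd (ptB \<gamma> b N - ptA \<gamma> b N) = 4 * (N powr \<gamma> / sqrt 2)"
    unfolding ptA_def ptB_def v1_def v2_def by (simp add: field_simps)
  then show ?thesis
    unfolding zpt_def by simp
qed

lemma nK_pos: "0 < nK \<gamma> N"
  by (simp add: nK_def)

lemma nK_bounds: "8 * N powr (2 * \<gamma>) < real (nK \<gamma> N)" "real (nK \<gamma> N) \<le> 8 * N powr (2 * \<gamma>) + 1"
proof -
  have "real (nK \<gamma> N) = real_of_int \<lfloor>8 * N powr (2 * \<gamma>)\<rfloor> + 1"
    unfolding nK_def by simp
  then show "8 * N powr (2 * \<gamma>) < real (nK \<gamma> N)" "real (nK \<gamma> N) \<le> 8 * N powr (2 * \<gamma>) + 1"
    by linarith+
qed

lemma Fpar_subset_cbox: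
  assumes i: "i \<in> {1..nK \<gamma> N}"
  shows "\<exists>u w. Fpar \<gamma> b N i \<subseteq> cbox u w \<and> measure lborel (cbox u w) \<le> 2"
proof -
  define q where "q = N powr \<gamma> / sqrt 2"
  define K where "K = real (nK \<gamma> N)"
  define y0 where "y0 = snd (zpt \<gamma> b N (i - 1))"
  define h where "h = 4 * q / K"
  have K1: "1 \<le> K"
    using nK_pos unfolding K_def by (simp add: Suc_le_eq)
  have q0: "0 \<le> q" and h0: "0 \<le> h"
    using K1 unfolding h_def q_def by simp_all
  have snd_zpt_i: "snd (zpt \<gamma> b N i) = y0 + h"
    using i K1 unfolding y0_def h_def snd_zpt K_def[symmetric] q_def[symmetric]
    by (simp add: of_nat_diff field_simps)
  have "Fpar \<gamma> b N i \<subseteq> cbox (y0 - 8 * q, y0) (y0 - 4 * q + h, y0 + h)"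
  proof
    fix p assume "p \<in> Fpar \<gamma> b N i"
    then have "p \<in> C2 \<gamma> N" "y0 \<le> snd p" "snd p \<le> y0 + h"
      unfolding Fpar_def y0_def snd_zpt_i by auto
    with C2_snd_minus_fst[OF this(1)] show "p \<in> cbox (y0 - 8 * q, y0) (y0 - 4 * q + h, y0 + h)"
      unfolding q_def[symmetric] by (cases p) (auto simp: cbox_Pair_iff)
  qed
  moreover have "measure lborel (cbox (y0 - 8 * q, y0) (y0 - 4 * q + h, y0 + h)) \<le> 2"
  proof -
    have "16 * q\<^sup>2 = 8 * N powr (2 * \<gamma>)"
      unfolding q_def by (simp add: power_divide power2_eq_square powr_add[symmetric])
    then have sq_le: "16 * q\<^sup>2 \<le> K"
      using nK_bounds(1)[of N \<gamma>] unfolding K_def by simp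
    have "measure lborel (cbox (y0 - 8 * q, y0) (y0 - 4 * q + h, y0 + h)) = (4 * q + h) * h"
      using q0 h0 by (simp add: content_Pair)
    also have "\<dots> = 16 * q\<^sup>2 / K + 16 * q\<^sup>2 / K\<^sup>2"
      unfolding h_def using K1 by (simp add: field_simps power2_eq_square)
    also have "\<dots> \<le> 1 + 1"
    proof (intro add_mono)
      show "16 * q\<^sup>2 / K \<le> 1"
        using sq_le K1 by simp
      have "K \<le> K\<^sup>2"
        using K1 by (simp add: power2_eq_square)
      then show "16 * q\<^sup>2 / K\<^sup>2 \<le> 1"
        using sq_le K1 by simp
    qed
    finally show ?thesis by simp
  qed
  ultimately show ?thesis by blast
qed

lemma Fpar'_subset_cbox:
  assumes "i \<in> {1..nK \<gamma> N}"
  shows "\<exists>u w. Fpar' \<gamma> b N i \<subseteq> cbox u w \<and> measure lborel (cbox u w) \<le> 2"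
proof -
  define c where "c = tN \<gamma> b N *\<^sub>R v1"
  obtain u w where uw: "Fpar \<gamma> b N i \<subseteq> cbox u w" "measure lborel (cbox u w) \<le> 2"
    using Fpar_subset_cbox[OF assms] by blast
  have "Fpar' \<gamma> b N i = (+) c ` Fpar \<gamma> b N i"
    unfolding Fpar'_def c_def by (simp add: add.commute)
  also have "\<dots> \<subseteq> cbox (c + u) (c + w)"
    using uw(1) by (simp add: cbox_translation image_mono)
  finally show ?thesis
    using uw(2) measure_lborel_cbox_translation by metis
qed

definition cells :: "real \<Rightarrow> real \<Rightarrow> real \<Rightarrow> pt set set" where
  "cells \<gamma> b N = Fpar \<gamma> b N ` {1..nK \<gamma> N} \<union> Fpar' \<gamma> b N ` {1..nK \<gamma> N}"

lemma finite_cells: "finite (cells \<gamma> b N)"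
  by (simp add: cells_def)

lemma card_cells_le: "real (card (cells \<gamma> b N)) \<le> 2 * (8 * N powr (2 * \<gamma>) + 1)"
proof -
  have "card (cells \<gamma> b N) \<le> 2 * nK \<gamma> N"
    using card_Un_le[of "Fpar \<gamma> b N ` {1..nK \<gamma> N}" "Fpar' \<gamma> b N ` {1..nK \<gamma> N}"]
      card_image_le[of "{1..nK \<gamma> N}" "Fpar \<gamma> b N"] card_image_le[of "{1..nK \<gamma> N}" "Fpar' \<gamma> b N"]
    unfolding cells_def by simp
  then have "real (card (cells \<gamma> b N)) \<le> 2 * real (nK \<gamma> N)"
    by (metis of_nat_mono of_nat_mult of_nat_numeral)
  then show ?thesis
    using nK_bounds(2)[of \<gamma> N] by (simp add: algebra_simps)
qed

lemma cells_subset_cbox: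
  "S \<in> cells \<gamma> b N \<Longrightarrow> \<exists>u w. S \<subseteq> cbox u w \<and> measure lborel (cbox u w) \<le> 2"
  unfolding cells_def using Fpar_subset_cbox Fpar'_subset_cbox by blast

lemma D_N_ge_imp_cell:
  assumes "d \<le> real (D_N \<gamma> b N P)"
  shows "\<exists>S\<in>cells \<gamma> b N. d / 2 \<le> real (count_in P (closure S))"
proof -
  have "{1..nK \<gamma> N} \<noteq> {}"
    using nK_pos[of \<gamma> N] by simp
  with assms obtain i where "i \<in> {1..nK \<gamma> N}"
    "d / 2 \<le> real (count_in P (closure (Fpar \<gamma> b N i)))
     \<or> d / 2 \<le> real (count_in P (closure (Fpar' \<gamma> b N i)))"
    using Max_add_Max_geD[of "{1..nK \<gamma> N}"] unfolding D_N_def by blast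
  then show ?thesis
    unfolding cells_def by blast
qed

lemma cell_count_tail:
  assumes pp: "poisson_pp M Om" and S: "S \<in> cells \<gamma> b N"
  shows "{x\<in>space M. t \<le> real (count_in (Om x) (closure S))} \<in> sets M"
    and "measure M {x\<in>space M. t \<le> real (count_in (Om x) (closure S))}
      \<le> exp (2 * (exp 1 - 1)) * exp (- t)"
proof -
  obtain u w where "S \<subseteq> cbox u w" "measure lborel (cbox u w) \<le> 2"
    using cells_subset_cbox[OF S] by blast
  note tail = poisson_pp_closure_count_tail[OF pp this, of t]
  show "{x\<in>space M. t \<le> real (count_in (Om x) (closure S))} \<in> sets M"
    by (fact tail(1))
  have "exp ((exp 1 - 1) * 2 - t) = exp (2 * (exp 1 - 1)) * exp (- t)"
    by (simp add: exp_add[symmetric] algebra_simps)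
  with tail(2) show "measure M {x\<in>space M. t \<le> real (count_in (Om x) (closure S))}
      \<le> exp (2 * (exp 1 - 1)) * exp (- t)"
    by simp
qed

theorem lemma2p1:
  "\<exists>C::real. \<forall>(M :: 'a measure) Om. poisson_pp M Om \<longrightarrow>
     (\<forall>\<gamma> b N d. xi_exp M Om < \<gamma> \<and> \<gamma> < 1 \<and> \<gamma> < b \<and> b < 1 \<and> 0 < N \<and>
        N powr b - 4 * N powr \<gamma> > 0 \<and> d \<ge> 1 \<longrightarrow>
        measure M {x \<in> space M. real (D_N \<gamma> b N (Om x)) \<ge> d}
          \<le> C * (8 * N powr (2 * \<gamma>) + 1) * exp (- d / 2))"
proof (intro exI[of _ "2 * exp (2 * (exp 1 - 1))"] allI impI)
  fix M :: "'a measure" and Om and \<gamma> b N d :: real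
  assume pp: "poisson_pp M Om"
  interpret prob_space M
    using pp unfolding poisson_pp_def by blast
  define p where "p = exp (2 * (exp 1 - 1)) * exp (- d / 2)"
  define tail where "tail S = {x\<in>space M. d / 2 \<le> real (count_in (Om x) (closure S))}" for S
  have tail: "tail S \<in> sets M" "measure M (tail S) \<le> p" if "S \<in> cells \<gamma> b N" for S
    using cell_count_tail[OF pp that, of "d / 2"] unfolding tail_def p_def by simp_all
  have "{x \<in> space M. d \<le> real (D_N \<gamma> b N (Om x))} \<subseteq> (\<Union>S\<in>cells \<gamma> b N. tail S)"
    unfolding tail_def by (blast dest: D_N_ge_imp_cell)
  then have "measure M {x \<in> space M. d \<le> real (D_N \<gamma> b N (Om x))}
      \<le> measure M (\<Union>S\<in>cells \<gamma> b N. tail S)"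
    using tail finite_cells by (intro finite_measure_mono) auto
  also have "\<dots> \<le> real (card (cells \<gamma> b N)) * p"
    using finite_cells tail by (rule measure_UNION_le_card_mult)
  also have "\<dots> \<le> 2 * (8 * N powr (2 * \<gamma>) + 1) * p"
    using card_cells_le by (rule mult_right_mono) (simp add: p_def)
  also have "\<dots> = 2 * exp (2 * (exp 1 - 1)) * (8 * N powr (2 * \<gamma>) + 1) * exp (- d / 2)"
    unfolding p_def by (simp only: ac_simps)
  finally show "measure M {x \<in> space M. d \<le> real (D_N \<gamma> b N (Om x))}
      \<le> 2 * exp (2 * (exp 1 - 1)) * (8 * N powr (2 * \<gamma>) + 1) * exp (- d / 2)" .
qed

end
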